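(* Let $c\ge 0$, $n\in\mathbb{R}$ with $n>c$, and $\rho\in\mathbb{N}$. Define for $t\in[0,\infty)$ $$\omega_{n,j,\rho}(t)=\begin{cases}\displaystyle\int_t^\infty \mu_{n,1,\rho}(u)\,du, & j=0,\\[2mm] \displaystyle\int_0^t\big(\mu_{n,j,\rho}(u)-\mu_{n,j+1,\rho}(u)\big)\,du, & j\in\mathbb{N}.\end{cases}$$ Then for every $j\in\mathbb{N}_0$ and every $t\in[0,\infty)$, $$\omega_{n,j,\rho}(t)=\sum_{i=0}^{\rho-1}p_{n\rho+c,\,i+j\rho}(t).$$
   Context: Notation: for $c\in\mathbb{R}$, $a\in\mathbb{R}$ and $j\in\mathbb{N}$, $a^{c,\overline{j}}=\prod_{l=0}^{j-1}(a+cl)$ and $a^{c,\underline{j}}=\prod_{l=0}^{j-1}(a-cl)$, with $a^{c,\overline{0}}=a^{c,\underline{0}}=1$. Fix $c\ge0$. For real $m$ (with $m>0$) and $j\in\mathbb{N}_0$, $x\in[0,\infty)$, the basis functions are $p_{m,j}(x)=\frac{m^j}{j!}x^je^{-mx}$ if $c=0$, and $p_{m,j}(x)=\frac{m^{c,\overline{j}}}{j!}x^j(1+cx)^{-(\frac{m}{c}+j)}$ if $c>0$. For $n>c$, $\rho>0$, $j\in\mathbb{N}$, $t>0$: $\mu_{n,j,\rho}(t)=\frac{(n\rho)^{j\rho}}{\Gamma(j\rho)}t^{j\rho-1}e^{-n\rho t}$ if $c=0$, and $\mu_{n,j,\rho}(t)=\frac{c^{j\rho}}{B(j\rho,\frac{n}{c}\rho+1)}t^{j\rho-1}(1+ct)^{-(\frac{n}{c}+j)\rho-1}$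 if $c>0$, where $B(x,y)=\Gamma(x)\Gamma(y)/\Gamma(x+y)$ is Euler's Beta function. *)

theory Defs
  imports "HOL-Analysis.Analysis"
begin

definition pfun :: "real \<Rightarrow> real \<Rightarrow> nat \<Rightarrow> real \<Rightarrow> real" where
  "pfun c m j x =
     (if c = 0 then m ^ j / fact j * x ^ j * exp (- m * x)
      else (\<Prod>l<j. m + c * real l) / fact j * x ^ j * (1 + c * x) powr (- (m / c + real j)))"

text \<open>Kernels mu_{n,j,rho}(t) (meant for t > 0).\<close>
definition mu :: "real \<Rightarrow> real \<Rightarrow> nat \<Rightarrow> real \<Rightarrow> real \<Rightarrow> real" where
  "mu c n j \<rho> t =
     (if c = 0 then (n * \<rho>) powr (real j * \<rho>) / Gamma (real j * \<rho>)
                    * t powr (real j * \<rho> - 1) * exp (- n * \<rho> * t)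
      else c powr (real j * \<rho>) / Beta (real j * \<rho>) (n / c * \<rho> + 1)
                    * t powr (real j * \<rho> - 1) * (1 + c * t) powr (- (n / c + real j) * \<rho> - 1))"

definition omega :: "real \<Rightarrow> real \<Rightarrow> nat \<Rightarrow> real \<Rightarrow> real \<Rightarrow> real" where
  "omega c n j \<rho> t =
     (if j = 0 then (LBINT u:{t..}. mu c n 1 \<rho> u)
      else (LBINT u:{0..t}. mu c n j \<rho> u - mu c n (Suc j) \<rho> u))"

end

theory Submission
  imports Defs "HOL-Real_Asymp.Real_Asymp"
begin

text \<open>
  With \<open>m = n\<rho> + c\<close> the basis functions satisfy
  \<open>p(m,k)' = m (p(m+c,k-1) - p(m+c,k))\<close>, so their partial sums telescope:
  \<open>(\<Sum>i\<le>k. p(m,i))' = - m p(m+c,k)\<close>. The kernel is itself a basis function,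
  \<open>\<mu>(n,j,\<rho>) = m p(m+c, j\<rho>-1)\<close>; for \<open>c > 0\<close> this is the identity
  \<open>c\<^sup>K / B(K,b) = c\<^sup>K b(b+1)\<cdots>(b+K-1) / (K-1)!\<close>.
  Hence by the fundamental theorem of calculus each \<open>\<omega>(n,j,\<rho>)\<close> is a difference of
  partial sums, which equal 1 at 0 and vanish at infinity.
\<close>

lemma prod_lessThan_Suc_shift_rising:
  "(\<Prod>l<Suc k. m + c * real l) = m * (\<Prod>l<k. (m + c) + c * real l)"
  unfolding prod.lessThan_Suc_shift by (simp add: algebra_simps)

lemma prod_rising_eq_pochhammer:
  fixes c m :: real
  assumes "c \<noteq> 0"
  shows "(\<Prod>l<k. m + c * real l) = c ^ k * pochhammer (m / c) k"
proof -
  have "(\<Prod>l<k. m + c * real l) = (\<Prod>l<k. c * (m / c + real l))"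
    using assms by (intro prod.cong) (simp_all add: field_simps)
  also have "\<dots> = c ^ k * pochhammer (m / c) k"
    by (simp add: prod.distrib pochhammer_prod atLeast0LessThan)
  finally show ?thesis .
qed

lemma Beta_of_nat_Suc:
  fixes b :: real
  assumes "b > 0"
  shows "Beta (real (Suc k)) b = fact k / pochhammer b (Suc k)"
proof -
  have "pochhammer b (Suc k) = Gamma (b + real (Suc k)) / Gamma b"
    using assms by (intro pochhammer_Gamma) (auto elim!: nonpos_Ints_cases)
  moreover have "Gamma b > 0" "Gamma (b + real (Suc k)) > 0"
    using assms by (simp_all add: Gamma_real_pos)
  ultimately show ?thesis
    by (simp add: Beta_def Gamma_fact add.commute)
qed

lemma pfun_at_0: "pfun c m k 0 = (if k = 0 then 1 else 0)"
  by (simp add: pfun_def)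

lemma pfun_nonneg:
  assumes "c \<ge> 0" "m \<ge> 0" "x \<ge> 0"
  shows "pfun c m k x \<ge> 0"
proof -
  have "(\<Prod>l<k. m + c * real l) \<ge> 0"
    using assms by (intro prod_nonneg) simp
  with assms show ?thesis
    unfolding pfun_def by simp
qed

definition pweight :: "real \<Rightarrow> real \<Rightarrow> nat \<Rightarrow> real \<Rightarrow> real" where
  "pweight c m k x = (if c = 0 then exp (- m * x) else (1 + c * x) powr - (m / c + real k))"

lemma pfun_eq_pweight:
  "pfun c m k x = (\<Prod>l<k. m + c * real l) / fact k * x ^ k * pweight c m k x"
  by (simp add: pfun_def pweight_def)

lemma pweight_shift: "pweight c (m + c) k x = pweight c m (Suc k) x"
proof (cases "c = 0")
  case False
  moreover have exponent: "- ((m + c) / c + real k) = - (m / c + real (Suc k))"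
    using False by (simp add: field_simps)
  ultimately show ?thesis
    by (simp only: pweight_def exponent if_False add_0_right)
qed (simp add: pweight_def)

lemma pweight_has_real_derivative:
  assumes "1 + c * x > 0"
  shows "(pweight c m k has_real_derivative - (m + c * real k) * pweight c m (Suc k) x) (at x)"
proof (cases "c = 0")
  case True
  then show ?thesis
    unfolding pweight_def by (auto intro!: derivative_eq_intros)
next
  case False
  define r where "r = - (m / c + real k)"
  have "((\<lambda>y. 1 + c * y) has_real_derivative c) (at x)"
    by (auto intro!: derivative_eq_intros)
  from DERIV_chain2[OF has_real_derivative_powr[OF assms] this]
  have deriv: "((\<lambda>y. (1 + c * y) powr r) has_real_derivative r * (1 + c * x) powr (r - 1) * c) (at x)"
    by simp
  have exponent: "- (m / c + real (Suc k)) = r - 1" and rc: "r * c = - (m + c * real k)"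
    using False by (simp_all add: r_def field_simps)
  have "pweight c m (Suc k) x = (1 + c * x) powr (r - 1)"
    using False unfolding pweight_def exponent by simp
  moreover have "pweight c m k = (\<lambda>y. (1 + c * y) powr r)"
    using False by (simp add: fun_eq_iff pweight_def r_def)
  ultimately show ?thesis
    unfolding rc[symmetric] by (auto intro: DERIV_cong[OF deriv])
qed

lemma mult_pfun_shift:
  "m * pfun c (m + c) k x = (\<Prod>l<Suc k. m + c * real l) / fact k * x ^ k * pweight c m (Suc k) x"
  unfolding pfun_eq_pweight pweight_shift prod_lessThan_Suc_shift_rising by simp

lemma pfun_0_has_real_derivative:
  assumes "1 + c * x > 0"
  shows "(pfun c m 0 has_real_derivative - m * pfun c (m + c) 0 x) (at x)"
proof -
  have "pfun c m 0 = pweight c m 0"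
    by (simp add: fun_eq_iff pfun_eq_pweight)
  then show ?thesis
    using pweight_has_real_derivative[OF assms, of m 0] by (simp add: mult_pfun_shift)
qed

lemma pfun_Suc_has_real_derivative:
  assumes "1 + c * x > 0"
  shows "(pfun c m (Suc k) has_real_derivative
           m * pfun c (m + c) k x - m * pfun c (m + c) (Suc k) x) (at x)"
proof -
  define P where "P = (\<Prod>l<Suc k. m + c * real l)"
  define a where "a = m + c * real (Suc k)"
  have pfun_eq: "pfun c m (Suc k) = (\<lambda>y. P / fact (Suc k) * (y ^ Suc k * pweight c m (Suc k) y))"
    by (simp add: fun_eq_iff pfun_eq_pweight P_def)
  have deriv: "((\<lambda>y. y ^ Suc k * pweight c m (Suc k) y) has_real_derivative
      real (Suc k) * x ^ k * pweight c m (Suc k) x - a * x ^ Suc k * pweight c m (Suc (Suc k)) x) (at x)"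
    using DERIV_mult[OF DERIV_pow[of "Suc k" x] pweight_has_real_derivative[OF assms, of m "Suc k"]]
    by (simp add: a_def algebra_simps)
  have "(fact (Suc k) :: real) = real (Suc k) * fact k"
    by simp
  then have "P / fact (Suc k) * (real (Suc k) * x ^ k * pweight c m (Suc k) x
        - a * x ^ Suc k * pweight c m (Suc (Suc k)) x)
      = P / fact k * x ^ k * pweight c m (Suc k) x
        - P * a / fact (Suc k) * x ^ Suc k * pweight c m (Suc (Suc k)) x"
    by (simp add: field_simps del: fact_Suc of_nat_Suc)
  also have "\<dots> = m * pfun c (m + c) k x - m * pfun c (m + c) (Suc k) x"
    unfolding mult_pfun_shift P_def a_def by simp
  finally show ?thesis
    unfolding pfun_eq by (rule DERIV_cong[OF DERIV_cmult[OF deriv]])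
qed

lemma sum_pfun_has_real_derivative:
  assumes "1 + c * x > 0"
  shows "((\<lambda>y. \<Sum>i<Suc k. pfun c m i y) has_real_derivative - m * pfun c (m + c) k x) (at x)"
proof (induction k)
  case 0
  then show ?case
    using pfun_0_has_real_derivative[OF assms] by simp
next
  case (Suc k)
  then show ?case
    using DERIV_add[OF Suc pfun_Suc_has_real_derivative[OF assms, of m k]] by simp
qed

lemma isCont_pfun:
  assumes "1 + c * x > 0"
  shows "isCont (pfun c m k) x"
  using assms DERIV_isCont pfun_0_has_real_derivative pfun_Suc_has_real_derivative
  by (cases k) blast+

lemma pfun_tendsto_0_at_top:
  assumes "c \<ge> 0" "m > 0"
  shows "(pfun c m k \<longlongrightarrow> 0) at_top"
proof (cases "c = 0")
  case True
  have "((\<lambda>x. m ^ k / fact k * (x ^ k * exp (- m * x))) \<longlongrightarrow> 0) at_top"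
    using assms by real_asymp
  moreover have "pfun c m k = (\<lambda>x. m ^ k / fact k * (x ^ k * exp (- m * x)))"
    using True by (simp add: fun_eq_iff pfun_def)
  ultimately show ?thesis
    by simp
next
  case False
  with assms have "c > 0"
    by simp
  define P where "P = (\<Prod>l<k. m + c * real l) / fact k"
  have "((\<lambda>x. x / (1 + c * x)) \<longlongrightarrow> inverse c) at_top"
    using \<open>c > 0\<close> by real_asymp
  moreover have "((\<lambda>x. (1 + c * x) powr - (m / c)) \<longlongrightarrow> 0) at_top"
    using \<open>c > 0\<close> assms by real_asymp
  ultimately have "((\<lambda>x. P * ((x / (1 + c * x)) ^ k * (1 + c * x) powr - (m / c))) \<longlongrightarrow> P * (inverse c ^ k * 0)) at_top"
    by (intro tendsto_intros)
  moreover have "eventually (\<lambda>x. P * ((x / (1 + c * x)) ^ k * (1 + c * x) powr - (m / c)) = pfun c m k x) at_top"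
    using eventually_ge_at_top[of 0]
  proof eventually_elim
    case (elim x)
    with \<open>c > 0\<close> have "(1 + c * x) powr - (m / c + real k) = (1 + c * x) powr - (m / c) / (1 + c * x) ^ k"
      by (simp add: powr_diff powr_realpow add_pos_nonneg flip: diff_conv_add_uminus)
    with False show ?case
      by (simp add: pfun_def P_def power_divide)
  qed
  ultimately show ?thesis
    by (simp add: tendsto_cong)
qed

lemma interval_integral_pfun:
  fixes a b :: ereal
  assumes "c \<ge> 0" "m > 0" "0 \<le> a" "a < b"
    and A: "(((\<lambda>x. \<Sum>i<Suc k. pfun c m i x) \<circ> real_of_ereal) \<longlongrightarrow> A) (at_right a)"
    and B: "(((\<lambda>x. \<Sum>i<Suc k. pfun c m i x) \<circ> real_of_ereal) \<longlongrightarrow> B) (at_left b)"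
  shows "set_integrable lborel (einterval a b) (\<lambda>x. m * pfun c (m + c) k x)"
    and "(LBINT x=a..b. m * pfun c (m + c) k x) = A - B"
proof -
  have x_pos: "x > 0" if "a < ereal x" for x
    using order.strict_trans1[OF \<open>0 \<le> a\<close> that] by simp
  have pos: "1 + c * x > 0" if "a < ereal x" for x
    using x_pos[OF that] \<open>c \<ge> 0\<close> by (simp add: add_pos_nonneg)
  have "DERIV (\<lambda>x. - (\<Sum>i<Suc k. pfun c m i x)) x :> m * pfun c (m + c) k x" if "a < ereal x" for x
    using DERIV_minus[OF sum_pfun_has_real_derivative[OF pos[OF that]]] by simp
  moreover have "isCont (\<lambda>x. m * pfun c (m + c) k x) x" if "a < ereal x" for x
    using isCont_pfun[OF pos[OF that]] by simp
  moreover have "0 \<le> m * pfun c (m + c) k x" if "a < ereal x" for x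
    using x_pos[OF that] \<open>c \<ge> 0\<close> \<open>m > 0\<close> by (intro mult_nonneg_nonneg pfun_nonneg) auto
  then have "AE x in lborel. a < ereal x \<longrightarrow> ereal x < b \<longrightarrow> 0 \<le> m * pfun c (m + c) k x"
    by (intro AE_I2) auto
  moreover have "(((\<lambda>x. - (\<Sum>i<Suc k. pfun c m i x)) \<circ> real_of_ereal) \<longlongrightarrow> - A) (at_right a)"
    "(((\<lambda>x. - (\<Sum>i<Suc k. pfun c m i x)) \<circ> real_of_ereal) \<longlongrightarrow> - B) (at_left b)"
    using tendsto_minus[OF A] tendsto_minus[OF B] by (simp_all add: o_def)
  ultimately have "set_integrable lborel (einterval a b) (\<lambda>x. m * pfun c (m + c) k x)"
    and "(LBINT x=a..b. m * pfun c (m + c) k x) = - B - - A"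
    by (intro interval_integral_FTC_nonneg[OF \<open>a < b\<close>, where F = "\<lambda>x. - (\<Sum>i<Suc k. pfun c m i x)"];
        simp del: sum.lessThan_Suc)+
  then show "set_integrable lborel (einterval a b) (\<lambda>x. m * pfun c (m + c) k x)"
    and "(LBINT x=a..b. m * pfun c (m + c) k x) = A - B"
    by simp_all
qed

lemma isCont_sum_pfun:
  assumes "1 + c * x > 0"
  shows "isCont (\<lambda>y. \<Sum>i<Suc k. pfun c m i y) x"
  using DERIV_isCont[OF sum_pfun_has_real_derivative[OF assms]] .

lemma set_integral_pfun_Ioo:
  assumes "c \<ge> 0" "m > 0" "t > 0"
  shows "set_integrable lborel {0<..<t} (\<lambda>x. m * pfun c (m + c) k x)"
    and "(LBINT x:{0<..<t}. m * pfun c (m + c) k x) = 1 - (\<Sum>i<Suc k. pfun c m i t)"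
proof -
  have "isCont (\<lambda>x. \<Sum>i<Suc k. pfun c m i x) 0" "isCont (\<lambda>x. \<Sum>i<Suc k. pfun c m i x) t"
    using assms by (simp_all add: isCont_sum_pfun add_pos_nonneg del: sum.lessThan_Suc)
  then have "((\<lambda>x. \<Sum>i<Suc k. pfun c m i x) \<longlongrightarrow> (\<Sum>i<Suc k. pfun c m i 0)) (at_right 0)"
    "((\<lambda>x. \<Sum>i<Suc k. pfun c m i x) \<longlongrightarrow> (\<Sum>i<Suc k. pfun c m i t)) (at_left t)"
    by (simp_all add: isCont_def filterlim_at_split del: sum.lessThan_Suc)
  moreover have "(\<Sum>i<Suc k. pfun c m i 0) = 1"
    by (simp add: pfun_at_0)
  moreover have "einterval (ereal 0) (ereal t) = {0<..<t}"
    by (auto simp: einterval_def)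
  ultimately show "set_integrable lborel {0<..<t} (\<lambda>x. m * pfun c (m + c) k x)"
    and "(LBINT x:{0<..<t}. m * pfun c (m + c) k x) = 1 - (\<Sum>i<Suc k. pfun c m i t)"
    using interval_integral_pfun[of c m "ereal 0" "ereal t" k 1] assms
    by (simp_all add: ereal_tendsto_simps1 interval_integral_Ioo del: sum.lessThan_Suc)
qed

lemma set_integral_pfun_Ioi:
  assumes "c \<ge> 0" "m > 0" "t \<ge> 0"
  shows "set_integrable lborel {t<..} (\<lambda>x. m * pfun c (m + c) k x)"
    and "(LBINT x:{t<..}. m * pfun c (m + c) k x) = (\<Sum>i<Suc k. pfun c m i t)"
proof -
  have "isCont (\<lambda>x. \<Sum>i<Suc k. pfun c m i x) t"
    using assms by (simp add: isCont_sum_pfun add_pos_nonneg del: sum.lessThan_Suc)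
  then have "((\<lambda>x. \<Sum>i<Suc k. pfun c m i x) \<longlongrightarrow> (\<Sum>i<Suc k. pfun c m i t)) (at_right t)"
    by (simp add: isCont_def filterlim_at_split del: sum.lessThan_Suc)
  moreover have "((\<lambda>x. \<Sum>i<Suc k. pfun c m i x) \<longlongrightarrow> 0) at_top"
    using tendsto_sum[of "{..<Suc k}", OF pfun_tendsto_0_at_top[OF assms(1,2)]] by simp
  moreover have "einterval (ereal t) \<infinity> = {t<..}"
    by (auto simp: einterval_def)
  ultimately show "set_integrable lborel {t<..} (\<lambda>x. m * pfun c (m + c) k x)"
    and "(LBINT x:{t<..}. m * pfun c (m + c) k x) = (\<Sum>i<Suc k. pfun c m i t)"
    using interval_integral_pfun[of c m "ereal t" \<infinity> k] assms
    by (simp_all add: ereal_tendsto_simps1 interval_integral_Ioi del: sum.lessThan_Suc)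
qed

lemma mu_eq_mult_pfun:
  assumes "c \<ge> 0" "n > c" "j * \<rho> = Suc k" "t > 0"
  shows "mu c n j (real \<rho>) t = (n * real \<rho> + c) * pfun c (n * real \<rho> + c + c) k t"
proof -
  define m where "m = n * real \<rho> + c"
  have "\<rho> > 0"
    using assms(3) by (cases \<rho>) auto
  then have "n * real \<rho> > 0"
    using assms by simp
  have jr: "real j * real \<rho> = real (Suc k)"
    using assms(3) by (metis of_nat_mult)
  have tk: "t powr (real (Suc k) - 1) = t ^ k"
    using \<open>t > 0\<close> by (simp add: powr_realpow)
  have "m * pfun c (m + c) k t = (\<Prod>l<Suc k. m + c * real l) / fact k * t ^ k * pweight c m (Suc k) t"
    by (rule mult_pfun_shift)
  moreover have "mu c n j (real \<rho>) t = (\<Prod>l<Suc k. m + c * real l) / fact k * t ^ k * pweight c m (Suc k) t"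
  proof (cases "c = 0")
    case True
    have "(n * real \<rho>) powr real (Suc k) = (n * real \<rho>) ^ Suc k"
      using \<open>n * real \<rho> > 0\<close> by (rule powr_realpow)
    with True show ?thesis
      unfolding mu_def jr tk by (simp add: pweight_def m_def Gamma_fact)
  next
    case False
    define b where "b = n / c * real \<rho> + 1"
    have "c > 0"
      using False assms by simp
    then have "b > 0"
      using \<open>n * real \<rho> > 0\<close> by (simp add: b_def add_pos_nonneg)
    have "m / c = b"
      using False by (simp add: m_def b_def field_simps)
    have c_powr: "c powr real (Suc k) = c ^ Suc k"
      using \<open>c > 0\<close> by (rule powr_realpow)
    have Beta: "Beta (real (Suc k)) b = fact k / pochhammer b (Suc k)"
      using \<open>b > 0\<close> by (rule Beta_of_nat_Suc)
    have prod: "(\<Prod>l<Suc k. m + c * real l) = c ^ Suc k * pochhammer b (Suc k)"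
      unfolding prod_rising_eq_pochhammer[OF False] \<open>m / c = b\<close> ..
    have exponent: "- (n / c + real j) * real \<rho> - 1 = - (m / c + real (Suc k))"
      using False jr by (simp add: m_def field_simps)
    have "pochhammer b (Suc k) > 0"
      using \<open>b > 0\<close> by (simp add: pochhammer_pos)
    with False show ?thesis
      unfolding mu_def pweight_def exponent jr tk b_def[symmetric] c_powr Beta prod by simp
  qed
  ultimately show ?thesis
    by (simp add: m_def)
qed

lemma omega_0_eq_sum_pfun:
  assumes "c \<ge> 0" "n > c" "\<rho> = Suc k" "t \<ge> 0"
  shows "omega c n 0 (real \<rho>) t = (\<Sum>i<\<rho>. pfun c (n * real \<rho> + c) i t)"
proof -
  define m where "m = n * real \<rho> + c"
  have "m > 0"
    using assms by (simp add: m_def add_pos_nonneg)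
  have "omega c n 0 (real \<rho>) t = (LBINT u:{t..}. mu c n 1 (real \<rho>) u)"
    by (simp add: omega_def)
  also have "\<dots> = (LBINT u:{t<..}. mu c n 1 (real \<rho>) u)"
    by (rule set_integral_discrete_difference[where X = "{t}"]) auto
  also have "\<dots> = (LBINT u:{t<..}. m * pfun c (m + c) k u)"
  proof (intro set_lebesgue_integral_cong allI impI)
    fix u assume "u \<in> {t<..}"
    with assms show "mu c n 1 (real \<rho>) u = m * pfun c (m + c) k u"
      unfolding m_def by (intro mu_eq_mult_pfun) auto
  qed simp
  also have "\<dots> = (\<Sum>i<\<rho>. pfun c m i t)"
    using set_integral_pfun_Ioi(2)[OF \<open>c \<ge> 0\<close> \<open>m > 0\<close> \<open>t \<ge> 0\<close>] assms(3) by simp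
  finally show ?thesis
    by (simp add: m_def)
qed

lemma omega_Suc_eq_sum_pfun:
  assumes "c \<ge> 0" "n > c" "Suc j * \<rho> = Suc k" "t \<ge> 0"
  shows "omega c n (Suc j) (real \<rho>) t = (\<Sum>i<\<rho>. pfun c (n * real \<rho> + c) (i + Suc j * \<rho>) t)"
proof (cases "t = 0")
  case True
  then have "omega c n (Suc j) (real \<rho>) t =
      (LBINT u:{0..0}. mu c n (Suc j) (real \<rho>) u - mu c n (Suc (Suc j)) (real \<rho>) u)"
    by (simp add: omega_def)
  also have "\<dots> = (LBINT u:{}. mu c n (Suc j) (real \<rho>) u - mu c n (Suc (Suc j)) (real \<rho>) u)"
    by (rule set_integral_discrete_difference[where X = "{0}"]) auto
  finally have "omega c n (Suc j) (real \<rho>) t = 0"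
    by (simp add: set_lebesgue_integral_def)
  moreover have "pfun c (n * real \<rho> + c) (i + Suc j * \<rho>) t = 0" for i
    using True assms(3) by (simp add: pfun_at_0)
  ultimately show ?thesis
    by simp
next
  case False
  with assms have "t > 0"
    by simp
  have "\<rho> > 0"
    using assms(3) by (cases \<rho>) auto
  define m where "m = n * real \<rho> + c"
  have "m > 0"
    using assms \<open>\<rho> > 0\<close> by (simp add: m_def add_pos_nonneg)
  have next_index: "Suc (Suc j) * \<rho> = Suc (k + \<rho>)"
    using assms(3) by simp
  note integrals = set_integral_pfun_Ioo[OF \<open>c \<ge> 0\<close> \<open>m > 0\<close> \<open>t > 0\<close>]
  have "omega c n (Suc j) (real \<rho>) t =
      (LBINT u:{0..t}. mu c n (Suc j) (real \<rho>) u - mu c n (Suc (Suc j)) (real \<rho>) u)"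
    by (simp add: omega_def)
  also have "\<dots> = (LBINT u:{0<..<t}. mu c n (Suc j) (real \<rho>) u - mu c n (Suc (Suc j)) (real \<rho>) u)"
    by (rule set_integral_discrete_difference[where X = "{0, t}"]) auto
  also have "\<dots> = (LBINT u:{0<..<t}. m * pfun c (m + c) k u - m * pfun c (m + c) (k + \<rho>) u)"
  proof (intro set_lebesgue_integral_cong allI impI)
    fix u assume "u \<in> {0<..<t}"
    with assms next_index show "mu c n (Suc j) (real \<rho>) u - mu c n (Suc (Suc j)) (real \<rho>) u =
        m * pfun c (m + c) k u - m * pfun c (m + c) (k + \<rho>) u"
      unfolding m_def by (simp add: mu_eq_mult_pfun add.commute)
  qed simp
  also have "\<dots> = (LBINT u:{0<..<t}. m * pfun c (m + c) k u) - (LBINT u:{0<..<t}. m * pfun c (m + c) (k + \<rho>) u)"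
    by (rule set_integral_diff(2)[OF integrals(1) integrals(1)])
  also have "\<dots> = (\<Sum>i<Suc (k + \<rho>). pfun c m i t) - (\<Sum>i<Suc k. pfun c m i t)"
    by (simp only: integrals(2))
  also have "\<dots> = (\<Sum>i<\<rho>. pfun c m (i + Suc k) t)"
  proof -
    have "(\<Sum>i<Suc k + r. f i) = (\<Sum>i<Suc k. f i) + (\<Sum>i<r. f (i + Suc k))" for r and f :: "nat \<Rightarrow> real"
      by (induction r) (simp_all add: add.commute)
    then show ?thesis
      by (simp del: sum.lessThan_Suc)
  qed
  finally show ?thesis
    unfolding assms(3) m_def .
qed

theorem lemma1:
  fixes c n t :: real and \<rho> j :: nat
  assumes "c \<ge> 0" and "n > c" and "\<rho> \<ge> 1" and "t \<ge> 0"
  shows "omega c n j (real \<rho>) t = (\<Sum>i<\<rho>. pfun c (n * real \<rho> + c) (i + j * \<rho>) t)"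
proof (cases j)
  case 0
  obtain k where "\<rho> = Suc k"
    using \<open>\<rho> \<ge> 1\<close> by (cases \<rho>) auto
  with 0 assms show ?thesis
    using omega_0_eq_sum_pfun by simp
next
  case (Suc j')
  then obtain k where "Suc j' * \<rho> = Suc k"
    using \<open>\<rho> \<ge> 1\<close> by (cases \<rho>) auto
  with Suc assms show ?thesis
    using omega_Suc_eq_sum_pfun by simp
qed

end
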